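(* Let $L$ be the graph obtained from the line graph $L(K_{5,6})$ of the complete bipartite graph $K_{5,6}$ by adding, for every edge $uv$ of $L(K_{5,6})$, a new vertex adjacent exactly to $u$ and $v$. Let $L\overline{L}$ be the disjoint union of $L$ and its complement $\overline L$. Then $L\overline{L}$ is $\cap$-triangle.
   Context: A graph $G$ is triangle if for every maximal stable set $S$ of $G$ and every edge $uv$ of $G$ with $u,v\notin S$, there is $s\in S$ adjacent to both $u$ and $v$. A graph is $\cap$-triangle if both it and its complement are triangle. *)

theory Defs
  imports Main
begin

text \<open>A (simple) graph is given by a vertex set V and an adjacency relation E
  (symmetric, irreflexive, supported on V).\<close>

definition stable_set :: "'a set \<Rightarrow> ('a \<Rightarrow> 'a \<Rightarrow> bool) \<Rightarrow> 'a set \<Rightarrow> bool" where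
  "stable_set V E S \<longleftrightarrow> S \<subseteq> V \<and> (\<forall>x\<in>S. \<forall>y\<in>S. \<not> E x y)"

definition maximal_stable_set :: "'a set \<Rightarrow> ('a \<Rightarrow> 'a \<Rightarrow> bool) \<Rightarrow> 'a set \<Rightarrow> bool" where
  "maximal_stable_set V E S \<longleftrightarrow> stable_set V E S \<and>
     (\<forall>T. stable_set V E T \<and> S \<subseteq> T \<longrightarrow> T = S)"

definition triangle_graph :: "'a set \<Rightarrow> ('a \<Rightarrow> 'a \<Rightarrow> bool) \<Rightarrow> bool" where
  "triangle_graph V E \<longleftrightarrow>
     (\<forall>S. maximal_stable_set V E S \<longrightarrow>
        (\<forall>u\<in>V. \<forall>v\<in>V. E u v \<and> u \<notin> S \<and> v \<notin> S \<longrightarrow> (\<exists>s\<in>S. E s u \<and> E s v)))"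

definition compl_graph :: "'a set \<Rightarrow> ('a \<Rightarrow> 'a \<Rightarrow> bool) \<Rightarrow> 'a \<Rightarrow> 'a \<Rightarrow> bool" where
  "compl_graph V E x y \<longleftrightarrow> x \<in> V \<and> y \<in> V \<and> x \<noteq> y \<and> \<not> E x y"

definition cap_triangle :: "'a set \<Rightarrow> ('a \<Rightarrow> 'a \<Rightarrow> bool) \<Rightarrow> bool" where
  "cap_triangle V E \<longleftrightarrow> triangle_graph V E \<and> triangle_graph V (compl_graph V E)"

definition union_verts :: "'a set \<Rightarrow> 'b set \<Rightarrow> ('a + 'b) set" where
  "union_verts V1 V2 = Inl ` V1 \<union> Inr ` V2"

fun union_edges :: "('a \<Rightarrow> 'a \<Rightarrow> bool) \<Rightarrow> ('b \<Rightarrow> 'b \<Rightarrow> bool) \<Rightarrow> 'a + 'b \<Rightarrow> 'a + 'b \<Rightarrow> bool" where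
  "union_edges E1 E2 (Inl x) (Inl y) = E1 x y"
| "union_edges E1 E2 (Inr x) (Inr y) = E2 x y"
| "union_edges E1 E2 _ _ = False"

text \<open>The line graph of K_{5,6}: vertices are the edges (i,j), i<5, j<6, of K_{5,6};
  two are adjacent iff they are distinct and share an endpoint.\<close>

definition LK_verts :: "(nat \<times> nat) set" where
  "LK_verts = {0..<5} \<times> {0..<6}"

definition LK_adj :: "nat \<times> nat \<Rightarrow> nat \<times> nat \<Rightarrow> bool" where
  "LK_adj u v \<longleftrightarrow> u \<in> LK_verts \<and> v \<in> LK_verts \<and> u \<noteq> v \<and>
     (fst u = fst v \<or> snd u = snd v)"

text \<open>The graph L: a vertex of L(K_{5,6}) or a new vertex for each edge {u,v}
  of L(K_{5,6}) (identified with that 2-set), adjacent exactly to u and v.\<close>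

datatype Lvert = Old "nat \<times> nat" | New "(nat \<times> nat) set"

definition L_verts :: "Lvert set" where
  "L_verts = Old ` LK_verts \<union> {New {u, v} | u v. LK_adj u v}"

fun L_adj :: "Lvert \<Rightarrow> Lvert \<Rightarrow> bool" where
  "L_adj (Old u) (Old v) = LK_adj u v"
| "L_adj (Old u) (New e) = (New e \<in> L_verts \<and> u \<in> e)"
| "L_adj (New e) (Old u) = (New e \<in> L_verts \<and> u \<in> e)"
| "L_adj (New e) (New f) = False"

definition LLbar_verts :: "(Lvert + Lvert) set" where
  "LLbar_verts = union_verts L_verts L_verts"

definition LLbar_adj :: "Lvert + Lvert \<Rightarrow> Lvert + Lvert \<Rightarrow> bool" where
  "LLbar_adj = union_edges L_adj (compl_graph L_verts L_adj)"

end

theory Submission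
  imports Defs
begin

text \<open>
  The complement of a disjoint union is the join of the complements, and both constructions
  preserve the triangle property: a maximal stable set of a disjoint union restricts to maximal
  stable sets of the two parts, while a maximal stable set of a join lies in one side, dominates
  that side and is adjacent to all of the other one. It therefore suffices that L and its
  complement are triangle graphs. In L, an edge of L(K_{5,6}) avoiding a maximal stable set S is
  covered by its subdivision vertex if that lies in S, and otherwise one of its ends would have to
  dominate it; an edge from an old vertex to a new one is covered by the neighbour dominating the
  new vertex. The maximal stable sets of the complement are the maximal cliques of L: a triangle
  consisting of a new vertex and its two neighbours, where the new vertex is non-adjacent to
  everything else, or a row or column of the 5 x 6 grid, which has at least five points, while a
  vertex outside it is adjacent to at most two of them.
\<close>

section \<open>Maximal stable sets\<close>

lemma maximal_stable_set_dominates: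
  assumes "maximal_stable_set V E S" "symp E" "irreflp E" "w \<in> V" "w \<notin> S"
  shows "\<exists>s\<in>S. E s w"
proof (rule ccontr)
  assume undominated: "\<not> ?thesis"
  have "stable_set V E S" using assms(1) unfolding maximal_stable_set_def by blast
  moreover have "\<not> E w w" using assms(3) by (rule irreflpD)
  ultimately have "stable_set V E (insert w S)"
    using undominated assms(2,4) unfolding stable_set_def by (auto dest: sympD)
  then have "insert w S = S"
    using assms(1) unfolding maximal_stable_set_def by (meson subset_insertI)
  with assms(5) show False by blast
qed

lemma maximal_stable_setI:
  assumes "stable_set V E S" "\<And>w. w \<in> V \<Longrightarrow> w \<notin> S \<Longrightarrow> \<exists>s\<in>S. E s w"
  shows "maximal_stable_set V E S"
  using assms unfolding maximal_stable_set_def stable_set_def by blast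

lemma maximal_stable_set_vimage:
  assumes S: "maximal_stable_set W G S" "symp G" "irreflp G"
    and f: "f ` V \<subseteq> W" "\<And>x y. x \<in> V \<Longrightarrow> y \<in> V \<Longrightarrow> G (f x) (f y) \<longleftrightarrow> E x y"
    and closed: "\<And>s w. s \<in> S \<Longrightarrow> w \<in> V \<Longrightarrow> G s (f w) \<Longrightarrow> s \<in> f ` V"
  shows "maximal_stable_set V E (f -` S \<inter> V)"
proof (rule maximal_stable_setI)
  have "\<not> G x y" if "x \<in> S" "y \<in> S" for x y
    using S(1) that unfolding maximal_stable_set_def stable_set_def by blast
  then show "stable_set V E (f -` S \<inter> V)"
    unfolding stable_set_def using f(2) by auto
next
  fix w assume w: "w \<in> V" "w \<notin> f -` S \<inter> V"
  then have "f w \<in> W" "f w \<notin> S" using f(1) by auto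
  then obtain s where s: "s \<in> S" "G s (f w)"
    using maximal_stable_set_dominates[OF S] by blast
  with closed w(1) obtain x where "x \<in> V" "s = f x" by blast
  with s w(1) f(2) show "\<exists>x\<in>f -` S \<inter> V. E x w" by auto
qed

lemma stable_set_compl_graph_iff:
  "stable_set V (compl_graph V E) S \<longleftrightarrow> S \<subseteq> V \<and> (\<forall>x\<in>S. \<forall>y\<in>S. x \<noteq> y \<longrightarrow> E x y)"
  unfolding stable_set_def compl_graph_def by blast

lemma maximal_clique_eq:
  assumes "maximal_stable_set V (compl_graph V E) S" "S \<subseteq> K" "K \<subseteq> V"
    "\<And>x y. x \<in> K \<Longrightarrow> y \<in> K \<Longrightarrow> x \<noteq> y \<Longrightarrow> E x y"
  shows "S = K"
proof -
  have "stable_set V (compl_graph V E) K"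
    using assms(3,4) unfolding stable_set_compl_graph_iff by blast
  with assms(1,2) show ?thesis
    unfolding maximal_stable_set_def by blast
qed

lemma triangle_graphD:
  assumes "triangle_graph V E" "maximal_stable_set V E S"
    and "u \<in> V" "v \<in> V" "E u v" "u \<notin> S" "v \<notin> S"
  obtains s where "s \<in> S" "E s u" "E s v"
  using assms unfolding triangle_graph_def by blast

lemma common_neighbour_in_image:
  assumes "triangle_graph V E"
    and S: "maximal_stable_set W G S" "symp G" "irreflp G"
    and f: "f ` V \<subseteq> W" "\<And>x y. x \<in> V \<Longrightarrow> y \<in> V \<Longrightarrow> G (f x) (f y) \<longleftrightarrow> E x y"
    and closed: "\<And>s w. s \<in> S \<Longrightarrow> w \<in> V \<Longrightarrow> G s (f w) \<Longrightarrow> s \<in> f ` V"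
    and uv: "u \<in> f ` V - S" "v \<in> f ` V - S" "G u v"
  shows "\<exists>s\<in>S. G s u \<and> G s v"
proof -
  obtain a b where ab: "u = f a" "v = f b" "a \<in> V" "b \<in> V" using uv by blast
  have "maximal_stable_set V E (f -` S \<inter> V)"
    by (rule maximal_stable_set_vimage[OF S f closed])
  moreover have "E a b" "a \<notin> f -` S \<inter> V" "b \<notin> f -` S \<inter> V"
    using ab uv f(2) by auto
  ultimately obtain s where "s \<in> f -` S \<inter> V" "E s a" "E s b"
    using triangle_graphD[OF assms(1) _ ab(3,4)] by blast
  with ab f(2) show ?thesis by auto
qed

section \<open>Complements, disjoint unions and joins\<close>

lemma symp_compl_graph: "symp E \<Longrightarrow> symp (compl_graph V E)"
  unfolding compl_graph_def by (blast intro: sympI dest: sympD)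

lemma irreflp_compl_graph: "irreflp (compl_graph V E)"
  unfolding compl_graph_def by (simp add: irreflpI)

lemma compl_graph_compl_graph:
  assumes "\<And>x y. E x y \<Longrightarrow> x \<in> V \<and> y \<in> V" "irreflp E"
  shows "compl_graph V (compl_graph V E) = E"
  using assms by (auto simp: compl_graph_def fun_eq_iff dest: irreflpD)

lemma symp_union_edges: "symp E1 \<Longrightarrow> symp E2 \<Longrightarrow> symp (union_edges E1 E2)"
  by (rule sympI, erule union_edges.elims) (auto dest: sympD)

lemma irreflp_union_edges:
  assumes "irreflp E1" "irreflp E2"
  shows "irreflp (union_edges E1 E2)"
proof (rule irreflpI)
  fix x show "\<not> union_edges E1 E2 x x" using assms by (cases x) (auto dest: irreflpD)
qed

lemma triangle_graph_union:
  assumes "triangle_graph V1 E1" "triangle_graph V2 E2"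
    and "symp E1" "symp E2" "irreflp E1" "irreflp E2"
  shows "triangle_graph (union_verts V1 V2) (union_edges E1 E2)"
  unfolding triangle_graph_def
proof (intro allI impI ballI)
  let ?W = "union_verts V1 V2" and ?F = "union_edges E1 E2"
  fix S u v
  assume S: "maximal_stable_set ?W ?F S" and "u \<in> ?W" "v \<in> ?W"
    and uv: "?F u v \<and> u \<notin> S \<and> v \<notin> S"
  have F: "symp ?F" "irreflp ?F"
    using assms(3-6) by (simp_all add: symp_union_edges irreflp_union_edges)
  have "S \<subseteq> ?W" using S unfolding maximal_stable_set_def stable_set_def by blast
  show "\<exists>s\<in>S. ?F s u \<and> ?F s v"
  proof (cases u; cases v)
    fix a b assume "u = Inl a" "v = Inl b"
    show ?thesis
    proof (rule common_neighbour_in_image[OF assms(1) S F, where f = Inl])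
      show "s \<in> Inl ` V1" if "s \<in> S" "w \<in> V1" "?F s (Inl w)" for s w
        using that \<open>S \<subseteq> ?W\<close> by (cases s) (auto simp: union_verts_def)
    qed (use uv \<open>u \<in> ?W\<close> \<open>v \<in> ?W\<close> \<open>u = Inl a\<close> \<open>v = Inl b\<close> in \<open>auto simp: union_verts_def\<close>)
  next
    fix a b assume "u = Inr a" "v = Inr b"
    show ?thesis
    proof (rule common_neighbour_in_image[OF assms(2) S F, where f = Inr])
      show "s \<in> Inr ` V2" if "s \<in> S" "w \<in> V2" "?F s (Inr w)" for s w
        using that \<open>S \<subseteq> ?W\<close> by (cases s) (auto simp: union_verts_def)
    qed (use uv \<open>u \<in> ?W\<close> \<open>v \<in> ?W\<close> \<open>u = Inr a\<close> \<open>v = Inr b\<close> in \<open>auto simp: union_verts_def\<close>)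
  qed (use uv in auto)
qed

lemma common_neighbour_in_join:
  assumes S: "maximal_stable_set W C S" "symp C" "irreflp C"
    and side: "S \<subseteq> A" "\<And>a b. a \<in> A \<Longrightarrow> b \<in> W - A \<Longrightarrow> C a b"
    and inside: "\<And>u v. u \<in> A - S \<Longrightarrow> v \<in> A - S \<Longrightarrow> C u v \<Longrightarrow> \<exists>s\<in>S. C s u \<and> C s v"
    and uv: "u \<in> W - S" "v \<in> W - S" "C u v"
  shows "\<exists>s\<in>S. C s u \<and> C s v"
proof -
  consider "u \<in> A" "v \<in> A" | "u \<notin> A" | "v \<notin> A" by blast
  then show ?thesis
  proof cases
    case 1
    with inside uv show ?thesis by blast
  next
    case 2
    obtain s where "s \<in> S" "C s v" using maximal_stable_set_dominates[OF S] uv(2) by blast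
    with 2 side uv(1) show ?thesis by blast
  next
    case 3
    obtain s where "s \<in> S" "C s u" using maximal_stable_set_dominates[OF S] uv(1) by blast
    with 3 side uv(2) show ?thesis by blast
  qed
qed

lemma triangle_graph_join:
  assumes "triangle_graph V1 (compl_graph V1 E1)" "triangle_graph V2 (compl_graph V2 E2)"
    and "symp E1" "symp E2"
  shows "triangle_graph (union_verts V1 V2) (compl_graph (union_verts V1 V2) (union_edges E1 E2))"
  unfolding triangle_graph_def
proof (intro allI impI ballI)
  let ?W = "union_verts V1 V2"
  let ?C = "compl_graph ?W (union_edges E1 E2)"
  have C: "symp ?C" "irreflp ?C"
    using assms(3,4) by (simp_all add: symp_compl_graph symp_union_edges irreflp_compl_graph)
  have C_Inl: "?C (Inl a) (Inl b) \<longleftrightarrow> compl_graph V1 E1 a b"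
    and C_Inr: "?C (Inr a') (Inr b') \<longleftrightarrow> compl_graph V2 E2 a' b'"
    and C_cross: "a \<in> V1 \<Longrightarrow> b' \<in> V2 \<Longrightarrow> ?C (Inl a) (Inr b') \<and> ?C (Inr b') (Inl a)"
    for a b a' b' by (auto simp: compl_graph_def union_verts_def)
  have sides: "?W - Inl ` V1 = Inr ` V2" "?W - Inr ` V2 = Inl ` V1"
    by (auto simp: union_verts_def)
  fix S u v
  assume S: "maximal_stable_set ?W ?C S" and "u \<in> ?W" "v \<in> ?W"
    and uv: "?C u v \<and> u \<notin> S \<and> v \<notin> S"
  then have uv': "u \<in> ?W - S" "v \<in> ?W - S" "?C u v" by auto
  have "S \<subseteq> ?W" "\<forall>x\<in>S. \<forall>y\<in>S. \<not> ?C x y"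
    using S unfolding maximal_stable_set_def stable_set_def by blast+
  then have "S \<subseteq> Inl ` V1 \<or> S \<subseteq> Inr ` V2"
    using C_cross unfolding union_verts_def by blast
  then show "\<exists>s\<in>S. ?C s u \<and> ?C s v"
  proof
    assume S1: "S \<subseteq> Inl ` V1"
    show ?thesis
    proof (rule common_neighbour_in_join[OF S C S1 _ _ uv'])
      show "?C a b" if "a \<in> Inl ` V1" "b \<in> ?W - Inl ` V1" for a b
        using that C_cross unfolding sides by blast
      show "\<exists>s\<in>S. ?C s x \<and> ?C s y" if "x \<in> Inl ` V1 - S" "y \<in> Inl ` V1 - S" "?C x y" for x y
        using common_neighbour_in_image[OF assms(1) S C _ C_Inl _ that] S1
        by (auto simp: union_verts_def)
    qed
  next
    assume S2: "S \<subseteq> Inr ` V2"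
    show ?thesis
    proof (rule common_neighbour_in_join[OF S C S2 _ _ uv'])
      show "?C a b" if "a \<in> Inr ` V2" "b \<in> ?W - Inr ` V2" for a b
        using that C_cross unfolding sides by blast
      show "\<exists>s\<in>S. ?C s x \<and> ?C s y" if "x \<in> Inr ` V2 - S" "y \<in> Inr ` V2 - S" "?C x y" for x y
        using common_neighbour_in_image[OF assms(2) S C _ C_Inr _ that] S2
        by (auto simp: union_verts_def)
    qed
  qed
qed

section \<open>The graph L\<close>

lemma LK_adj_sym: "LK_adj a b \<Longrightarrow> LK_adj b a"
  unfolding LK_adj_def by auto

lemma Old_in_L_verts [simp]: "Old c \<in> L_verts \<longleftrightarrow> c \<in> LK_verts"
  by (auto simp: L_verts_def)

lemma New_in_L_verts: "New e \<in> L_verts \<longleftrightarrow> (\<exists>a b. e = {a, b} \<and> LK_adj a b)"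
  by (auto simp: L_verts_def)

lemma symp_L_adj: "symp L_adj"
proof (rule sympI)
  fix x y show "L_adj x y \<Longrightarrow> L_adj y x" by (cases x; cases y) (auto intro: LK_adj_sym)
qed

lemma irreflp_L_adj: "irreflp L_adj"
proof (rule irreflpI)
  fix x show "\<not> L_adj x x" by (cases x) (auto simp: LK_adj_def)
qed

lemma L_adj_in_L_verts: "L_adj x y \<Longrightarrow> x \<in> L_verts \<and> y \<in> L_verts"
  by (cases x; cases y) (auto simp: New_in_L_verts LK_adj_def)

lemma triangle_graph_L: "triangle_graph L_verts L_adj"
  unfolding triangle_graph_def
proof (intro allI impI ballI)
  fix S u v
  assume S: "maximal_stable_set L_verts L_adj S" and "u \<in> L_verts" "v \<in> L_verts"
    and uv: "L_adj u v \<and> u \<notin> S \<and> v \<notin> S"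
  have subdivided: "Old a \<in> S \<or> Old b \<in> S" if ab: "LK_adj a b" "New {a, b} \<notin> S" for a b
  proof -
    have "New {a, b} \<in> L_verts" using ab(1) unfolding New_in_L_verts by blast
    then obtain s where "s \<in> S" "L_adj s (New {a, b})"
      using maximal_stable_set_dominates[OF S symp_L_adj irreflp_L_adj] ab(2) by blast
    then show ?thesis by (cases s) auto
  qed
  have old_new: "\<exists>s\<in>S. L_adj s (Old a) \<and> L_adj s (New f)"
    if af: "L_adj (Old a) (New f)" "Old a \<notin> S" "New f \<notin> S" for a f
  proof -
    obtain p q where "f = {p, q}" "LK_adj p q" "a \<in> f"
      using af(1) unfolding L_adj.simps New_in_L_verts by blast
    then obtain b where f: "f = {a, b}" "LK_adj a b"
      by (metis LK_adj_sym empty_iff insert_commute insertE)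
    with af(2,3) have "Old b \<in> S" using subdivided by blast
    with f af(1) show ?thesis by (auto intro!: bexI[of _ "Old b"] LK_adj_sym)
  qed
  show "\<exists>s\<in>S. L_adj s u \<and> L_adj s v"
  proof (cases u; cases v)
    fix a b assume uv_old: "u = Old a" "v = Old b"
    with uv have "LK_adj a b" "New {a, b} \<in> S" using subdivided[of a b] by auto
    moreover from \<open>LK_adj a b\<close> have "New {a, b} \<in> L_verts" unfolding New_in_L_verts by blast
    ultimately show ?thesis using uv_old by (auto intro!: bexI[of _ "New {a, b}"])
  next
    fix a f assume "u = Old a" "v = New f"
    with uv old_new show ?thesis by blast
  next
    fix f a assume "u = New f" "v = Old a"
    with uv old_new symp_L_adj show ?thesis by (blast dest: sympD)
  qed (use uv in auto)
qed

section \<open>Maximal cliques of L\<close>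

definition LK_line :: "(nat \<times> nat) set \<Rightarrow> bool" where
  "LK_line P \<longleftrightarrow> (\<exists>i<5. P = {i} \<times> {0..<6}) \<or> (\<exists>j<6. P = {0..<5} \<times> {j})"

lemma LK_line_clique:
  assumes "LK_line P"
  shows "P \<subseteq> LK_verts" "\<And>x y. x \<in> P \<Longrightarrow> y \<in> P \<Longrightarrow> x \<noteq> y \<Longrightarrow> LK_adj x y"
  using assms by (auto simp: LK_line_def LK_verts_def LK_adj_def)

lemma card_LK_line: "LK_line P \<Longrightarrow> 5 \<le> card P"
  by (auto simp: LK_line_def card_cartesian_product)

lemma LK_clique_subset_line:
  assumes P: "P \<subseteq> LK_verts" and clique: "\<And>x y. x \<in> P \<Longrightarrow> y \<in> P \<Longrightarrow> x \<noteq> y \<Longrightarrow> LK_adj x y"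
  shows "\<exists>Q. LK_line Q \<and> P \<subseteq> Q"
proof (cases "P = {}")
  case True
  have "LK_line ({0} \<times> {0..<6})" unfolding LK_line_def by (intro disjI1 exI[of _ 0]) simp
  then show ?thesis using True by blast
next
  case False
  then obtain i j where ij: "(i, j) \<in> P" by auto
  with P have "i < 5" "j < 6" by (auto simp: LK_verts_def)
  show ?thesis
  proof (cases "\<forall>x\<in>P. fst x = i")
    case True
    with P have "P \<subseteq> {i} \<times> {0..<6}" by (auto simp: LK_verts_def)
    moreover have "LK_line ({i} \<times> {0..<6})" using \<open>i < 5\<close> unfolding LK_line_def by blast
    ultimately show ?thesis by blast
  next
    case False
    then obtain p q where pq: "(p, q) \<in> P" "p \<noteq> i" by auto
    have "LK_adj (p, q) (i, j)" using clique pq ij by blast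
    with pq(2) have "q = j" by (simp add: LK_adj_def)
    have "y = j" if "(x, y) \<in> P" for x y
    proof (rule ccontr)
      assume "y \<noteq> j"
      with that ij clique have "LK_adj (x, y) (i, j)" by blast
      with \<open>y \<noteq> j\<close> have "x = i" by (simp add: LK_adj_def)
      with that pq \<open>q = j\<close> \<open>y \<noteq> j\<close> clique have "LK_adj (i, y) (p, j)" by blast
      with pq(2) \<open>y \<noteq> j\<close> show False by (simp add: LK_adj_def)
    qed
    with P have "P \<subseteq> {0..<5} \<times> {j}" by (auto simp: LK_verts_def)
    moreover have "LK_line ({0..<5} \<times> {j})" using \<open>j < 6\<close> unfolding LK_line_def by blast
    ultimately show ?thesis by blast
  qed
qed

lemma L_maximal_clique_New:
  assumes S: "maximal_stable_set L_verts (compl_graph L_verts L_adj) S"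
    and ab: "New {a, b} \<in> S" "LK_adj a b"
  shows "S = {New {a, b}, Old a, Old b}"
proof (rule maximal_clique_eq[OF S])
  have clique: "\<And>x y. x \<in> S \<Longrightarrow> y \<in> S \<Longrightarrow> x \<noteq> y \<Longrightarrow> L_adj x y"
    using S unfolding maximal_stable_set_def stable_set_compl_graph_iff by blast
  show "S \<subseteq> {New {a, b}, Old a, Old b}"
  proof
    fix x assume "x \<in> S"
    with ab(1) clique have "x = New {a, b} \<or> L_adj x (New {a, b})" by blast
    then show "x \<in> {New {a, b}, Old a, Old b}" by (cases x) auto
  qed
  have "New {a, b} \<in> L_verts" using ab(2) unfolding New_in_L_verts by blast
  moreover have "a \<in> LK_verts" "b \<in> LK_verts" using ab(2) by (simp_all add: LK_adj_def)
  ultimately show "{New {a, b}, Old a, Old b} \<subseteq> L_verts" by simp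
  then show "L_adj x y"
    if "x \<in> {New {a, b}, Old a, Old b}" "y \<in> {New {a, b}, Old a, Old b}" "x \<noteq> y" for x y
    using that ab(2) LK_adj_sym[OF ab(2)] by auto
qed

lemma L_maximal_clique_Old:
  assumes S: "maximal_stable_set L_verts (compl_graph L_verts L_adj) S"
    and "S \<subseteq> range Old"
  shows "\<exists>Q. LK_line Q \<and> S = Old ` Q"
proof -
  have "S \<subseteq> L_verts" and clique: "\<And>x y. x \<in> S \<Longrightarrow> y \<in> S \<Longrightarrow> x \<noteq> y \<Longrightarrow> L_adj x y"
    using S unfolding maximal_stable_set_def stable_set_compl_graph_iff by blast+
  obtain Q where Q: "LK_line Q" "Old -` S \<subseteq> Q"
  proof (rule LK_clique_subset_line[THEN exE])
    show "Old -` S \<subseteq> LK_verts" using \<open>S \<subseteq> L_verts\<close> by auto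
    show "LK_adj x y" if "x \<in> Old -` S" "y \<in> Old -` S" "x \<noteq> y" for x y
      using that clique[of "Old x" "Old y"] by simp
  qed blast
  have "S = Old ` Q"
  proof (rule maximal_clique_eq[OF S])
    show "S \<subseteq> Old ` Q" using Q(2) \<open>S \<subseteq> range Old\<close> by blast
    show "Old ` Q \<subseteq> L_verts" using LK_line_clique(1)[OF Q(1)] by auto
    show "L_adj x y" if "x \<in> Old ` Q" "y \<in> Old ` Q" "x \<noteq> y" for x y
    proof -
      from that obtain c d where "x = Old c" "y = Old d" "c \<in> Q" "d \<in> Q" by blast
      with that(3) show ?thesis using LK_line_clique(2)[OF Q(1)] by simp
    qed
  qed
  with Q(1) show ?thesis by blast
qed

lemma L_maximal_clique_cases:
  assumes S: "maximal_stable_set L_verts (compl_graph L_verts L_adj) S"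
  shows "(\<exists>a b. LK_adj a b \<and> S = {New {a, b}, Old a, Old b}) \<or> (\<exists>Q. LK_line Q \<and> S = Old ` Q)"
proof (cases "\<exists>f. New f \<in> S")
  case True
  then obtain f where "New f \<in> S" by blast
  moreover from this S have "New f \<in> L_verts"
    unfolding maximal_stable_set_def stable_set_def by blast
  ultimately obtain a b where "New {a, b} \<in> S" "LK_adj a b"
    unfolding New_in_L_verts by blast
  with L_maximal_clique_New[OF S] show ?thesis by blast
next
  case False
  then have "S \<subseteq> range Old" using Lvert.exhaust by blast
  with L_maximal_clique_Old[OF S] show ?thesis by blast
qed

lemma L_neighbours_in_line:
  assumes "LK_line Q" "x \<in> L_verts" "x \<notin> Old ` Q"
  shows "card {c \<in> Q. L_adj (Old c) x} \<le> 2"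
proof (cases x)
  case (Old d)
  obtain p q where d: "d = (p, q)" by fastforce
  with assms Old have "p < 5" "q < 6" "(p, q) \<notin> Q" by (auto simp: LK_verts_def)
  have "\<exists>c. {c \<in> Q. LK_adj c d} \<subseteq> {c}"
    using assms(1) unfolding LK_line_def
  proof (elim disjE exE conjE)
    fix i assume "Q = {i} \<times> {0..<6}"
    with \<open>q < 6\<close> \<open>(p, q) \<notin> Q\<close> d have "{c \<in> Q. LK_adj c d} \<subseteq> {(i, q)}"
      by (auto simp: LK_adj_def)
    then show ?thesis by blast
  next
    fix j assume "Q = {0..<5} \<times> {j}"
    with \<open>p < 5\<close> \<open>(p, q) \<notin> Q\<close> d have "{c \<in> Q. LK_adj c d} \<subseteq> {(p, j)}"
      by (auto simp: LK_adj_def)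
    then show ?thesis by blast
  qed
  then obtain c where "{c \<in> Q. LK_adj c d} \<subseteq> {c}" by blast
  then have "card {c \<in> Q. LK_adj c d} \<le> card {c}" by (rule card_mono[rotated]) simp
  with Old show ?thesis by simp
next
  case (New f)
  with assms(2) have "New f \<in> L_verts" by simp
  then obtain a b where "f = {a, b}" unfolding New_in_L_verts by blast
  then have "{c \<in> Q. L_adj (Old c) x} \<subseteq> {a, b}" using New by auto
  then have "card {c \<in> Q. L_adj (Old c) x} \<le> card {a, b}" by (rule card_mono[rotated]) simp
  also have "\<dots> \<le> 2" by (simp add: card_insert_if)
  finally show ?thesis .
qed

lemma triangle_graph_Lbar: "triangle_graph L_verts (compl_graph L_verts L_adj)"
  unfolding triangle_graph_def
proof (intro allI impI ballI)
  let ?C = "compl_graph L_verts L_adj"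
  fix S u v
  assume S: "maximal_stable_set L_verts ?C S" and "u \<in> L_verts" "v \<in> L_verts"
    and uv: "?C u v \<and> u \<notin> S \<and> v \<notin> S"
  have "S \<subseteq> L_verts" using S unfolding maximal_stable_set_def stable_set_def by blast
  have "\<exists>s\<in>S. \<not> L_adj s u \<and> \<not> L_adj s v"
    using L_maximal_clique_cases[OF S]
  proof
    assume "\<exists>a b. LK_adj a b \<and> S = {New {a, b}, Old a, Old b}"
    then obtain a b where S_triangle: "S = {New {a, b}, Old a, Old b}" by blast
    have "\<not> L_adj (New {a, b}) w" if "w \<notin> S" for w
      using that S_triangle by (cases w) auto
    with uv S_triangle show ?thesis by blast
  next
    assume "\<exists>Q. LK_line Q \<and> S = Old ` Q"
    then obtain Q where Q: "LK_line Q" "S = Old ` Q" by blast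
    let ?N = "\<lambda>w. {c \<in> Q. L_adj (Old c) w}"
    have "card (?N u) \<le> 2" "card (?N v) \<le> 2"
      using L_neighbours_in_line[OF Q(1)] \<open>u \<in> L_verts\<close> \<open>v \<in> L_verts\<close> uv Q(2) by simp_all
    moreover have "5 \<le> card Q" using Q(1) by (rule card_LK_line)
    ultimately have "card (?N u \<union> ?N v) < card Q"
      using card_Un_le[of "?N u" "?N v"] by linarith
    then have "?N u \<union> ?N v \<noteq> Q" by auto
    then obtain c where "c \<in> Q" "c \<notin> ?N u \<union> ?N v" by blast
    with Q(2) show ?thesis by blast
  qed
  with \<open>S \<subseteq> L_verts\<close> \<open>u \<in> L_verts\<close> \<open>v \<in> L_verts\<close> uv show "\<exists>s\<in>S. ?C s u \<and> ?C s v"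
    unfolding compl_graph_def by blast
qed

theorem proposition39:
  shows "cap_triangle LLbar_verts LLbar_adj"
proof -
  have Lbar: "symp (compl_graph L_verts L_adj)" "irreflp (compl_graph L_verts L_adj)"
    by (simp_all add: symp_L_adj symp_compl_graph irreflp_compl_graph)
  have "triangle_graph LLbar_verts LLbar_adj"
    unfolding LLbar_verts_def LLbar_adj_def
    using triangle_graph_L triangle_graph_Lbar symp_L_adj Lbar(1) irreflp_L_adj Lbar(2)
    by (rule triangle_graph_union)
  moreover have "compl_graph L_verts (compl_graph L_verts L_adj) = L_adj"
    using L_adj_in_L_verts irreflp_L_adj by (rule compl_graph_compl_graph)
  then have "triangle_graph LLbar_verts (compl_graph LLbar_verts LLbar_adj)"
    unfolding LLbar_verts_def LLbar_adj_def
    using triangle_graph_join[OF triangle_graph_Lbar _ symp_L_adj Lbar(1)] triangle_graph_L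
    by simp
  ultimately show ?thesis unfolding cap_triangle_def ..
qed

end
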